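(* Let $T$ be a perfect binary tree with nonnegative node weights $(x_v)$, let $1\le k\le K$ be integers, $\epsilon>0$, and fix a level $\ell$ of $T$ containing at least $M=\lceil(1+\epsilon)K/\epsilon\rceil$ nodes. For each node $v$ let $T_v$ be the set of descendants of $v$ (including $v$) and $u_v=\sum_{w\in T_v}x_w$. Let $u$ be the $M$-th largest value among $\{u_v: v \text{ at level }\ell\}$ (with multiplicity), let $D=\{v \text{ at level } \ell: u_v<u\}$ and $Z=\bigcup_{v\in D}T_v$. Let $\mathrm{OPT}=\min_{\Omega\in\mathbb{T}_k}\sum_{w\notin\Omega}x_w$ and $\check{\mathrm{OPT}}=\min\{\sum_{w\notin\Omega}x_w:\Omega\in\mathbb{T}_k,\ \Omega\cap Z=\emptyset\}$. Then $\check{\mathrm{OPT}}\le(1+\epsilon)\mathrm{OPT}$.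
   Context: $\mathbb{T}_k$ denotes the family of node sets $\Omega\subseteq T$ that contain the root, are closed under taking parents, and satisfy $|\Omega|\le k$. The level of a node is counted from the leaves (leaves are at level 1); all nodes at a given level have the same number of descendants. *)

theory Defs
  imports Complex_Main "HOL-Library.Multiset"
begin

text \<open>Perfect binary tree of height h: nodes are root-to-node paths (bool lists) of
length < h. The root is [], the children of v are v@[False], v@[True]; the parent
of v@[b] is v. Leaves have length h-1.\<close>

definition tree_nodes :: "nat \<Rightarrow> bool list set" where
  "tree_nodes h = {v. length v < h}"

text \<open>Level counted from the leaves: leaves are at level 1, the root at level h.\<close>
definition level :: "nat \<Rightarrow> bool list \<Rightarrow> nat" where
  "level h v = h - length v"

definition level_nodes :: "nat \<Rightarrow> nat \<Rightarrow> bool list set" where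
  "level_nodes h l = {v \<in> tree_nodes h. level h v = l}"

definition descendants :: "nat \<Rightarrow> bool list \<Rightarrow> bool list set" where
  "descendants h v = {w \<in> tree_nodes h. \<exists>r. w = v @ r}"

definition rooted_subtrees :: "nat \<Rightarrow> nat \<Rightarrow> bool list set set" where
  "rooted_subtrees h k = {\<Omega>. \<Omega> \<subseteq> tree_nodes h \<and> [] \<in> \<Omega>
      \<and> (\<forall>v b. v @ [b] \<in> \<Omega> \<longrightarrow> v \<in> \<Omega>) \<and> card \<Omega> \<le> k}"

definition cost :: "nat \<Rightarrow> (bool list \<Rightarrow> real) \<Rightarrow> bool list set \<Rightarrow> real" where
  "cost h x \<Omega> = (\<Sum>w \<in> tree_nodes h - \<Omega>. x w)"

definition subtree_weight :: "nat \<Rightarrow> (bool list \<Rightarrow> real) \<Rightarrow> bool list \<Rightarrow> real" where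
  "subtree_weight h x v = (\<Sum>w \<in> descendants h v. x w)"

definition mth_largest :: "nat \<Rightarrow> real multiset \<Rightarrow> real" where
  "mth_largest m A = rev (sorted_list_of_multiset A) ! (m - 1)"

end

theory Submission
  imports Defs
begin

text \<open>Take an optimal \<Omega> and cut away the light subtrees, \<Omega>' = \<Omega> - Z; this stays a rooted
subtree because Z is closed downwards and misses the root. If \<Omega> meets the level in s \<le> K
nodes, at most s light subtrees are cut, each of weight below u, so the cost grows by at most
s u. Conversely at least M - s nodes of the level with subtree weight \<ge> u lie outside \<Omega>,
and their disjoint subtrees are entirely uncovered, so OPT \<ge> (M - s) u. Since
(1 + \<epsilon>) s \<le> (1 + \<epsilon>) K \<le> \<epsilon> M, we get s u \<le> \<epsilon> (M - s) u \<le> \<epsilon> OPT.\<close>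

lemma finite_tree_nodes: "finite (tree_nodes h)"
proof -
  have "tree_nodes h \<subseteq> {xs. set xs \<subseteq> (UNIV :: bool set) \<and> length xs \<le> h}"
    by (auto simp: tree_nodes_def)
  then show ?thesis
    using finite_lists_length_le[of "UNIV :: bool set" h] finite_subset by auto
qed

lemma descendants_snoc:
  "v \<in> descendants h d \<Longrightarrow> v @ [b] \<in> tree_nodes h \<Longrightarrow> v @ [b] \<in> descendants h d"
  by (auto simp: descendants_def)

lemma descendants_subset_tree_nodes: "descendants h v \<subseteq> tree_nodes h"
  by (auto simp: descendants_def)

lemma finite_descendants: "finite (descendants h v)"
  using descendants_subset_tree_nodes finite_tree_nodes finite_subset by blast

lemma subtree_weight_nonneg:
  assumes "\<forall>w \<in> tree_nodes h. x w \<ge> 0"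
  shows "subtree_weight h x v \<ge> 0"
  unfolding subtree_weight_def
  using assms descendants_subset_tree_nodes by (meson subsetD sum_nonneg)

lemma rooted_subtrees_prefix_closed:
  assumes "\<Omega> \<in> rooted_subtrees h k" "v @ r \<in> \<Omega>"
  shows "v \<in> \<Omega>"
  using assms(2)
proof (induction r rule: rev_induct)
  case (snoc b r)
  then have "(v @ r) @ [b] \<in> \<Omega>" by simp
  with assms(1) have "v @ r \<in> \<Omega>"
    unfolding rooted_subtrees_def by blast
  then show ?case by (rule snoc.IH)
qed simp

lemma finite_rooted_subtrees: "finite (rooted_subtrees h k)"
  by (rule finite_subset[of _ "Pow (tree_nodes h)"])
    (auto simp: rooted_subtrees_def finite_tree_nodes)

lemma finite_rooted_subtree: "\<Omega> \<in> rooted_subtrees h k \<Longrightarrow> finite \<Omega>"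
  using finite_tree_nodes finite_subset by (auto simp: rooted_subtrees_def)

lemma root_in_rooted_subtrees: "1 \<le> h \<Longrightarrow> 1 \<le> k \<Longrightarrow> {[]} \<in> rooted_subtrees h k"
  by (auto simp: rooted_subtrees_def tree_nodes_def)

lemma rooted_subtrees_Diff:
  assumes "\<Omega> \<in> rooted_subtrees h k" "[] \<notin> Z"
    and "\<And>v b. v \<in> Z \<Longrightarrow> v @ [b] \<in> tree_nodes h \<Longrightarrow> v @ [b] \<in> Z"
  shows "\<Omega> - Z \<in> rooted_subtrees h k"
proof -
  have \<Omega>: "\<Omega> \<subseteq> tree_nodes h" "[] \<in> \<Omega>" "card \<Omega> \<le> k"
    using assms(1) by (simp_all add: rooted_subtrees_def)
  have "v \<in> \<Omega> - Z" if "v @ [b] \<in> \<Omega> - Z" for v b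
  proof -
    have "v \<in> \<Omega>"
      using that rooted_subtrees_prefix_closed[OF assms(1)] by blast
    moreover have "v \<notin> Z"
      using that \<Omega>(1) assms(3)[of v b] by blast
    ultimately show ?thesis by blast
  qed
  moreover have "card (\<Omega> - Z) \<le> card \<Omega>"
    using finite_rooted_subtree[OF assms(1)] by (intro card_mono) auto
  ultimately show ?thesis
    unfolding rooted_subtrees_def mem_Collect_eq
    using \<Omega> assms(2) by (intro conjI allI impI) (blast | linarith)+
qed

lemma descendants_disjoint:
  "length v = length v' \<Longrightarrow> v \<noteq> v' \<Longrightarrow> descendants h v \<inter> descendants h v' = {}"
  by (auto simp: descendants_def append_eq_append_conv)

lemma sum_UN_descendants:
  assumes "finite S" "\<And>v. v \<in> S \<Longrightarrow> length v = n"
  shows "sum x (\<Union>v \<in> S. descendants h v) = (\<Sum>v \<in> S. subtree_weight h x v)"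
  unfolding subtree_weight_def
  using assms by (intro sum.UNION_disjoint) (auto simp: finite_descendants dest: descendants_disjoint)

lemma cost_Diff:
  assumes "\<Omega> \<subseteq> tree_nodes h"
  shows "cost h x (\<Omega> - Z) = cost h x \<Omega> + sum x (\<Omega> \<inter> Z)"
proof -
  have split: "tree_nodes h - (\<Omega> - Z) = (tree_nodes h - \<Omega>) \<union> (\<Omega> \<inter> Z)"
    using assms by auto
  have "finite \<Omega>"
    using assms finite_tree_nodes finite_subset by blast
  then show ?thesis
    unfolding cost_def split using finite_tree_nodes[of h]
    by (intro sum.union_disjoint) auto
qed

lemma sum_Int_UN_descendants_le:
  assumes \<Omega>: "\<Omega> \<in> rooted_subtrees h k" and x: "\<forall>w \<in> tree_nodes h. x w \<ge> 0"
    and D: "finite D" "\<And>v. v \<in> D \<Longrightarrow> length v = n"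
  shows "sum x (\<Omega> \<inter> (\<Union>v \<in> D. descendants h v)) \<le> (\<Sum>v \<in> D \<inter> \<Omega>. subtree_weight h x v)"
proof -
  have "\<Omega> \<inter> (\<Union>v \<in> D. descendants h v) \<subseteq> (\<Union>v \<in> D \<inter> \<Omega>. descendants h v)"
    using rooted_subtrees_prefix_closed[OF \<Omega>] by (auto simp: descendants_def)
  then have "sum x (\<Omega> \<inter> (\<Union>v \<in> D. descendants h v)) \<le> sum x (\<Union>v \<in> D \<inter> \<Omega>. descendants h v)"
    using D(1) x finite_descendants by (intro sum_mono2) (auto simp: descendants_def)
  also have "\<dots> = (\<Sum>v \<in> D \<inter> \<Omega>. subtree_weight h x v)"
    using D by (intro sum_UN_descendants) auto
  finally show ?thesis .
qed

lemma sum_subtree_weight_le_cost: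
  assumes \<Omega>: "\<Omega> \<in> rooted_subtrees h k" and x: "\<forall>w \<in> tree_nodes h. x w \<ge> 0"
    and G: "finite G" "\<And>v. v \<in> G \<Longrightarrow> length v = n" "G \<inter> \<Omega> = {}"
  shows "(\<Sum>v \<in> G. subtree_weight h x v) \<le> cost h x \<Omega>"
proof -
  have "(\<Union>v \<in> G. descendants h v) \<subseteq> tree_nodes h - \<Omega>"
    using G(3) rooted_subtrees_prefix_closed[OF \<Omega>] by (fastforce simp: descendants_def)
  then have "sum x (\<Union>v \<in> G. descendants h v) \<le> cost h x \<Omega>"
    unfolding cost_def using x by (intro sum_mono2) (auto simp: finite_tree_nodes)
  then show ?thesis
    using G by (simp add: sum_UN_descendants)
qed

lemma level_nodes_length: "v \<in> level_nodes h l \<Longrightarrow> l \<le> h \<Longrightarrow> length v = h - l"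
  by (auto simp: level_nodes_def level_def tree_nodes_def)

lemma finite_level_nodes: "finite (level_nodes h l)"
  using finite_tree_nodes by (simp add: level_nodes_def)

lemma card_Int_rooted_subtree_le: "\<Omega> \<in> rooted_subtrees h k \<Longrightarrow> card (A \<inter> \<Omega>) \<le> k"
  using card_mono[OF finite_rooted_subtree, of \<Omega> h k "A \<inter> \<Omega>"]
  by (simp add: rooted_subtrees_def)

lemma Nil_notin_UN_descendants:
  assumes "D \<subseteq> level_nodes h l" "l \<le> h" "1 < card (level_nodes h l)"
  shows "[] \<notin> (\<Union>v \<in> D. descendants h v)"
proof
  assume "[] \<in> (\<Union>v \<in> D. descendants h v)"
  then have "[] \<in> level_nodes h l"
    using assms(1) by (auto simp: descendants_def)
  then have "h - l = 0"
    using level_nodes_length[OF _ assms(2)] by force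
  then have "level_nodes h l \<subseteq> {[]}"
    using level_nodes_length[OF _ assms(2)] by auto
  then show False
    using assms(3) card_mono[of "{[]}" "level_nodes h l"] by simp
qed

lemma rooted_subtrees_Diff_UN_descendants:
  assumes "\<Omega> \<in> rooted_subtrees h k" "D \<subseteq> level_nodes h l" "l \<le> h" "1 < card (level_nodes h l)"
  shows "\<Omega> - (\<Union>v \<in> D. descendants h v) \<in> rooted_subtrees h k"
proof (rule rooted_subtrees_Diff[OF assms(1) Nil_notin_UN_descendants[OF assms(2-4)]])
  fix v b
  assume "v \<in> (\<Union>v \<in> D. descendants h v)" "v @ [b] \<in> tree_nodes h"
  then show "v @ [b] \<in> (\<Union>v \<in> D. descendants h v)"
    using descendants_snoc by blast
qed

lemma cost_prune_light_subtrees: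
  assumes \<Omega>: "\<Omega> \<in> rooted_subtrees h k" and x: "\<forall>w \<in> tree_nodes h. x w \<ge> 0"
    and l: "l \<le> h" and D: "D \<subseteq> level_nodes h l" "\<forall>v \<in> D. subtree_weight h x v \<le> u"
    and u: "u \<ge> 0"
  shows "cost h x (\<Omega> - (\<Union>v \<in> D. descendants h v))
      \<le> cost h x \<Omega> + real (card (level_nodes h l \<inter> \<Omega>)) * u"
proof -
  have finD: "finite D"
    using D(1) finite_level_nodes finite_subset by blast
  have "sum x (\<Omega> \<inter> (\<Union>v \<in> D. descendants h v)) \<le> (\<Sum>v \<in> D \<inter> \<Omega>. subtree_weight h x v)"
    using finD D(1) level_nodes_length[OF _ l]
    by (intro sum_Int_UN_descendants_le[OF \<Omega> x]) auto
  also have "\<dots> \<le> real (card (D \<inter> \<Omega>)) * u"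
    using D(2) sum_mono[of "D \<inter> \<Omega>" "subtree_weight h x" "\<lambda>_. u"] by simp
  also have "\<dots> \<le> real (card (level_nodes h l \<inter> \<Omega>)) * u"
    using D(1) u finite_level_nodes by (intro mult_right_mono) (auto intro: card_mono)
  finally show ?thesis
    using \<Omega> by (simp add: cost_Diff rooted_subtrees_def)
qed

lemma cost_ge_heavy_subtrees:
  assumes \<Omega>: "\<Omega> \<in> rooted_subtrees h k" and x: "\<forall>w \<in> tree_nodes h. x w \<ge> 0"
    and l: "l \<le> h" and H: "H \<subseteq> level_nodes h l" "\<forall>v \<in> H. u \<le> subtree_weight h x v"
    and m: "m \<le> card H" and u: "u \<ge> 0"
  shows "(real m - real (card (level_nodes h l \<inter> \<Omega>))) * u \<le> cost h x \<Omega>"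
proof -
  have finH: "finite H"
    using H(1) finite_level_nodes finite_subset by blast
  have "H \<subseteq> (H - \<Omega>) \<union> (level_nodes h l \<inter> \<Omega>)"
    using H(1) by blast
  then have "card H \<le> card ((H - \<Omega>) \<union> (level_nodes h l \<inter> \<Omega>))"
    using finH finite_level_nodes by (intro card_mono) auto
  also have "\<dots> \<le> card (H - \<Omega>) + card (level_nodes h l \<inter> \<Omega>)"
    by (rule card_Un_le)
  finally have "card H \<le> card (H - \<Omega>) + card (level_nodes h l \<inter> \<Omega>)" .
  then have "(real m - real (card (level_nodes h l \<inter> \<Omega>))) * u \<le> real (card (H - \<Omega>)) * u"
    using m u by (intro mult_right_mono) auto
  also have "\<dots> \<le> (\<Sum>v \<in> H - \<Omega>. subtree_weight h x v)"
    using H(2) sum_mono[of "H - \<Omega>" "\<lambda>_. u" "subtree_weight h x"] by simp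
  also have "\<dots> \<le> cost h x \<Omega>"
    using finH H(1) level_nodes_length[OF _ l]
    by (intro sum_subtree_weight_le_cost[OF \<Omega> x]) auto
  finally show ?thesis .
qed

lemma sorted_length_filter_less_nth:
  fixes xs :: "'a::linorder list"
  assumes "sorted xs" "i < length xs"
  shows "length (filter (\<lambda>y. y < xs ! i) xs) \<le> i"
proof -
  have "xs ! i \<le> y" if "y \<in> set (drop i xs)" for y
  proof -
    from that obtain j where "j < length xs - i" "y = xs ! (i + j)"
      by (auto simp: in_set_conv_nth)
    with assms show ?thesis by (simp add: sorted_nth_mono)
  qed
  then have "filter (\<lambda>y. y < xs ! i) (drop i xs) = []"
    by (fastforce simp: filter_empty_conv)
  then have "filter (\<lambda>y. y < xs ! i) xs = filter (\<lambda>y. y < xs ! i) (take i xs)"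
    by (metis append_Nil2 append_take_drop_id filter_append)
  then show ?thesis
    by (metis length_filter_le length_take min.bounded_iff)
qed

lemma mth_largest_in_multiset_and_few_below:
  assumes "1 \<le> m" "m \<le> size A"
  shows "mth_largest m A \<in># A"
    and "size (filter_mset (\<lambda>y. y < mth_largest m A) A) \<le> size A - m"
proof -
  define xs where "xs = sorted_list_of_multiset A"
  have len: "length xs = size A"
    by (metis xs_def mset_sorted_list_of_multiset size_mset)
  have nth: "mth_largest m A = xs ! (size A - m)"
    using assms len by (simp add: mth_largest_def xs_def[symmetric] rev_nth)
  have idx: "size A - m < length xs"
    using assms len by simp
  show "mth_largest m A \<in># A"
    using nth idx by (metis xs_def nth_mem set_sorted_list_of_multiset)
  have "size (filter_mset (\<lambda>y. y < mth_largest m A) A)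
      = length (filter (\<lambda>y. y < xs ! (size A - m)) xs)"
    by (metis nth xs_def mset_filter mset_sorted_list_of_multiset size_mset)
  also have "\<dots> \<le> size A - m"
    using idx by (intro sorted_length_filter_less_nth) (simp_all add: xs_def)
  finally show "size (filter_mset (\<lambda>y. y < mth_largest m A) A) \<le> size A - m" .
qed

lemma mth_largest_image_mset_set:
  fixes f :: "'a \<Rightarrow> real"
  assumes "finite S" "1 \<le> m" "m \<le> card S"
  defines "u \<equiv> mth_largest m (image_mset f (mset_set S))"
  shows "u \<in> f ` S" and "m \<le> card {v \<in> S. u \<le> f v}"
proof -
  define A where "A = image_mset f (mset_set S)"
  have size: "size A = card S"
    by (simp add: A_def)
  show "u \<in> f ` S"
    using mth_largest_in_multiset_and_few_below(1)[of m A] assms size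
    by (simp add: A_def u_def)
  have "card {v \<in> S. f v < u} = size (filter_mset (\<lambda>y. y < u) A)"
    using assms(1) by (simp add: A_def filter_mset_image_mset)
  also have "\<dots> \<le> card S - m"
    using mth_largest_in_multiset_and_few_below(2)[of m A] assms size by (simp add: A_def)
  finally have "card {v \<in> S. f v < u} \<le> card S - m" .
  moreover have "{v \<in> S. u \<le> f v} = S - {v \<in> S. f v < u}"
    by auto
  ultimately show "m \<le> card {v \<in> S. u \<le> f v}"
    using assms(1,3) card_Diff_subset[of "{v \<in> S. f v < u}" S] card_mono[of S "{v \<in> S. f v < u}"]
    by auto
qed

lemma ceiling_ratio_bound:
  fixes \<epsilon> :: real
  assumes "\<epsilon> > 0" "1 \<le> K" "M = nat \<lceil>(1 + \<epsilon>) * real K / \<epsilon>\<rceil>"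
  shows "(1 + \<epsilon>) * real K \<le> \<epsilon> * real M" and "K < M"
proof -
  have "(1 + \<epsilon>) * real K / \<epsilon> \<le> real M"
    using assms by (simp add: real_nat_ceiling_ge)
  then show le: "(1 + \<epsilon>) * real K \<le> \<epsilon> * real M"
    using assms(1) by (simp add: field_simps)
  then have "\<epsilon> * real K < \<epsilon> * real M"
    using assms(2) by (simp add: algebra_simps)
  then show "K < M"
    using assms(1) by simp
qed

lemma pruning_cost_bound:
  fixes \<epsilon> u c c' :: real
  assumes "\<epsilon> > 0" "u \<ge> 0" "s \<le> K" "(1 + \<epsilon>) * real K \<le> \<epsilon> * real M"
    and "c' \<le> c + real s * u" "(real M - real s) * u \<le> c"
  shows "c' \<le> (1 + \<epsilon>) * c"
proof -
  have "(1 + \<epsilon>) * real s \<le> (1 + \<epsilon>) * real K"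
    using assms(1,3) by (intro mult_left_mono) auto
  then have "real s \<le> \<epsilon> * (real M - real s)"
    using assms(4) by (simp add: algebra_simps)
  then have "real s * u \<le> \<epsilon> * (real M - real s) * u"
    using assms(2) by (rule mult_right_mono)
  also have "\<dots> \<le> \<epsilon> * c"
    using assms(1,6) by (simp add: mult.assoc)
  finally show ?thesis
    using assms(5) by (simp add: algebra_simps)
qed

theorem mainTheorem8:
  fixes h k K l :: nat and \<epsilon> :: real and x :: "bool list \<Rightarrow> real"
  assumes h_pos: "h \<ge> 1"
    and x_nonneg: "\<forall>v \<in> tree_nodes h. x v \<ge> 0"
    and k_ge: "1 \<le> k" and kK: "k \<le> K"
    and eps_pos: "\<epsilon> > 0"
    and l_range: "1 \<le> l" "l \<le> h"
    and M_def: "M = nat \<lceil>(1 + \<epsilon>) * real K / \<epsilon>\<rceil>"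
    and level_big: "card (level_nodes h l) \<ge> M"
    and u_def: "u = mth_largest M (image_mset (subtree_weight h x) (mset_set (level_nodes h l)))"
    and D_def: "D = {v \<in> level_nodes h l. subtree_weight h x v < u}"
    and Z_def: "Z = (\<Union>v \<in> D. descendants h v)"
    and OPT_def: "OPT = Min (cost h x ` rooted_subtrees h k)"
    and OPTc_def: "OPTc = Min (cost h x ` {\<Omega> \<in> rooted_subtrees h k. \<Omega> \<inter> Z = {}})"
  shows "OPTc \<le> (1 + \<epsilon>) * OPT"
proof -
  have MK: "(1 + \<epsilon>) * real K \<le> \<epsilon> * real M" and K_lt_M: "K < M"
    using ceiling_ratio_bound[OF eps_pos _ M_def] k_ge kK by auto
  have u_in: "u \<in> subtree_weight h x ` level_nodes h l"
    and heavy: "M \<le> card {v \<in> level_nodes h l. u \<le> subtree_weight h x v}"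
    using mth_largest_image_mset_set[of "level_nodes h l" M "subtree_weight h x"]
      finite_level_nodes level_big K_lt_M by (simp_all add: u_def)
  have u_nonneg: "u \<ge> 0"
    using u_in subtree_weight_nonneg[OF x_nonneg] by auto
  have "OPT \<in> cost h x ` rooted_subtrees h k"
    unfolding OPT_def using root_in_rooted_subtrees[OF h_pos k_ge]
    by (intro Min_in finite_imageI finite_rooted_subtrees) auto
  then obtain \<Omega> where \<Omega>: "\<Omega> \<in> rooted_subtrees h k" and OPT_eq: "OPT = cost h x \<Omega>"
    by blast
  define s where "s = card (level_nodes h l \<inter> \<Omega>)"
  have s_le: "s \<le> K"
    using card_Int_rooted_subtree_le[OF \<Omega>, of "level_nodes h l"] kK
    unfolding s_def by linarith
  have D_light: "D \<subseteq> level_nodes h l" "\<forall>v \<in> D. subtree_weight h x v \<le> u"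
    by (auto simp: D_def)
  have "1 < card (level_nodes h l)"
    using level_big K_lt_M k_ge kK by simp
  then have "\<Omega> - Z \<in> rooted_subtrees h k"
    unfolding Z_def
    by (rule rooted_subtrees_Diff_UN_descendants[OF \<Omega> D_light(1) l_range(2)])
  then have "OPTc \<le> cost h x (\<Omega> - Z)"
    unfolding OPTc_def by (intro Min_le) (auto simp: finite_rooted_subtrees)
  also have "\<dots> \<le> cost h x \<Omega> + real s * u"
    unfolding Z_def s_def
    by (rule cost_prune_light_subtrees[OF \<Omega> x_nonneg l_range(2) D_light u_nonneg])
  finally have upper: "OPTc \<le> cost h x \<Omega> + real s * u" .
  have lower: "(real M - real s) * u \<le> cost h x \<Omega>"
    unfolding s_def
    by (rule cost_ge_heavy_subtrees[OF \<Omega> x_nonneg l_range(2) _ _ heavy u_nonneg]) auto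
  show ?thesis
    unfolding OPT_eq by (rule pruning_cost_bound[OF eps_pos u_nonneg s_le MK upper lower])
qed

end
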